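(* Let $J,K\subseteq[n]$ with $|J|=|K|$. Then $\mathfrak F_{J,K}=0$ unless $K\le_{\mathrm{Gale}}J$. Moreover $\mathfrak F_{J,J}=\pm f_J$, where $f_J=\prod_{j\in J}x_j\prod_{j<i\le n}(x_j^2-x_i^2)$.
   Context: For $S\subseteq[n]$ and integer $r$, $h^2_r(S)$ is the complete homogeneous symmetric polynomial of degree $r$ in $\{x_s^2:s\in S\}$, with $h^2_0(S)=1$ and $h^2_r(S)=0$ for $r<0$. Let $\mathcal H$ be the $n\times n$ matrix with $(i,j)$ entry $h^2_{i-j}(\{i,i+1,\dots,n\})$. For a matrix $M$ and row set $R$, column set $C$ of equal size, $\Delta_{R,C}(M)$ is the minor with rows $R$ and columns $C$ (equal to $1$ if $R=C=\emptyset$). For $K\subseteq[n]$, $K^*=\{n+1-k:k\in K\}$. For $J,K\subseteq[n]$ with $|J|=|K|=r$, $$\mathfrak F_{J,K}=\sum_{I\subseteq[n],\,|I|=r}(-1)^{\sum_{i\in I}i}\,\Delta_{[n]\setminus J,\,([n]\setminus I)^*}(\mathcal H)\cdot\det\big(x_k^{2i-1}\big)_{k\in K,\,i\in I},$$ the last determinant having rows indexed by $K$ and columns by $I$ in increasing order. Gale order: for equal-size subsets, $\{a_1<\dots<a_r\}\le_{\mathrm{Gale}}\{b_1<\dots<b_r\}$ iff $a_s\le b_s$ for all $s$. *)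

theory Defs
  imports "Jordan_Normal_Form.Determinant"
begin

text \<open>Polynomials in x_1..x_n are represented by their evaluation functions
  (x :: nat => 'a, 'a an arbitrary commutative ring); x k is the variable x_k.\<close>

definition hsq :: "(nat \<Rightarrow> 'a::comm_ring_1) \<Rightarrow> nat set \<Rightarrow> int \<Rightarrow> 'a" where
  "hsq x S r = (if r < 0 then 0 else
     (\<Sum>m\<in>{m :: nat \<Rightarrow> nat. (\<forall>s. s \<notin> S \<longrightarrow> m s = 0) \<and> sum m S = nat r}.
        \<Prod>s\<in>S. (x s ^ 2) ^ m s))"

definition Hmat :: "nat \<Rightarrow> (nat \<Rightarrow> 'a::comm_ring_1) \<Rightarrow> nat \<Rightarrow> nat \<Rightarrow> 'a" where
  "Hmat n x i j = hsq x {i..n} (int i - int j)"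

text \<open>Minor with rows R, columns C (both in increasing order); 1 for R = C = {}.\<close>
definition minor :: "(nat \<Rightarrow> nat \<Rightarrow> 'a::comm_ring_1) \<Rightarrow> nat set \<Rightarrow> nat set \<Rightarrow> 'a" where
  "minor M R C = det (mat (card R) (card R)
      (\<lambda>(a, b). M (sorted_list_of_set R ! a) (sorted_list_of_set C ! b)))"

definition star :: "nat \<Rightarrow> nat set \<Rightarrow> nat set" where
  "star n K = (\<lambda>k. n + 1 - k) ` K"

definition gale_le :: "nat set \<Rightarrow> nat set \<Rightarrow> bool" where
  "gale_le A B \<longleftrightarrow> card A = card B \<and>
     (\<forall>s < card A. sorted_list_of_set A ! s \<le> sorted_list_of_set B ! s)"

definition frakF :: "nat \<Rightarrow> (nat \<Rightarrow> 'a::comm_ring_1) \<Rightarrow> nat set \<Rightarrow> nat set \<Rightarrow> 'a" where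
  "frakF n x J K = (\<Sum>I\<in>{I. I \<subseteq> {1..n} \<and> card I = card J}.
      (-1) ^ (\<Sum>I) * minor (Hmat n x) ({1..n} - J) (star n ({1..n} - I))
        * minor (\<lambda>k i. x k ^ (2 * i - 1)) K I)"

definition fJ :: "nat \<Rightarrow> (nat \<Rightarrow> 'a::comm_ring_1) \<Rightarrow> nat set \<Rightarrow> 'a" where
  "fJ n x J = (\<Prod>j\<in>J. x j * (\<Prod>i\<in>{j<..n}. x j ^ 2 - x i ^ 2))"

end

theory Submission
  imports Defs
begin

(* Let V = (x_k^(2i-1)) and let G be H with its columns reversed. Newton interpolation of t^(i-1) at
   the nodes x_n^2, ..., x_1^2, whose divided differences are the h^2_r({j,...,n}), gives V = M G with
   M_kj = x_k prod_{j<l<=n} (x_k^2 - x_l^2), and M_kj = 0 for j < k.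
   By the Laplace expansion along the first r rows, F_{J,K} is up to sign the determinant of the
   n x n matrix stacking the rows K of V on the rows [n]-J of G. This matrix is the product of the
   matrix stacking the rows K of M on the unit rows [n]-J with G, and det G = +-1 because H is
   lower unitriangular. Expanding again along the first r rows, the unit rows select the columns J,
   so F_{J,K} = +- det M_{K,J}. As M is upper triangular this minor vanishes unless K <=_Gale J, and
   for K = J it is the product of the diagonal entries M_jj, which is f_J. *)

definition det_sub :: "('r \<Rightarrow> 'c \<Rightarrow> 'a::comm_ring_1) \<Rightarrow> 'r list \<Rightarrow> 'c list \<Rightarrow> 'a" where
  "det_sub f rs cs = det (mat (length rs) (length rs) (\<lambda>(a, b). f (rs ! a) (cs ! b)))"

definition rev_perm :: "nat \<Rightarrow> nat \<Rightarrow> nat" where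
  "rev_perm m = (\<lambda>i. if i < m then m - 1 - i else i)"

lemma minor_eq_det_sub: "minor M R C = det_sub M (sorted_list_of_set R) (sorted_list_of_set C)"
  unfolding minor_def det_sub_def by simp

lemma det_sub_Nil [simp]: "det_sub f [] cs = 1"
  unfolding det_sub_def by simp

lemma det_sub_map_rows: "det_sub f (map g rs) cs = det_sub (\<lambda>r c. f (g r) c) rs cs"
  unfolding det_sub_def by (rule arg_cong[of _ _ det], rule eq_matI, auto)

lemma det_sub_map_cols:
  "length cs = length rs \<Longrightarrow> det_sub f rs (map g cs) = det_sub (\<lambda>r c. f r (g c)) rs cs"
  unfolding det_sub_def by (rule arg_cong[of _ _ det], rule eq_matI, auto)

lemma det_sub_expand_first_row:
  assumes "length cs = Suc (length rs)"
  shows "det_sub f (r # rs) cs = (\<Sum>j<Suc (length rs).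
           (-1) ^ j * f r (cs ! j) * det_sub f rs (take j cs @ drop (Suc j) cs))"
proof -
  let ?m = "Suc (length rs)"
  let ?A = "mat ?m ?m (\<lambda>(a, b). f ((r # rs) ! a) (cs ! b))"
  have "det_sub f (r # rs) cs = (\<Sum>j<?m. ?A $$ (0, j) * cofactor ?A 0 j)"
    unfolding det_sub_def length_Cons by (rule laplace_expansion_row) simp_all
  also have "\<dots> = (\<Sum>j<?m. (-1) ^ j * f r (cs ! j) * det_sub f rs (take j cs @ drop (Suc j) cs))"
  proof (rule sum.cong[OF refl])
    fix j assume j: "j \<in> {..<?m}"
    have "mat_delete ?A 0 j = mat (length rs) (length rs) (\<lambda>(a, b). f (rs ! a) ((take j cs @ drop (Suc j) cs) ! b))"
      using j assms by (intro eq_matI) (auto simp: mat_delete_def nth_append min_def)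
    then show "?A $$ (0, j) * cofactor ?A 0 j
        = (-1) ^ j * f r (cs ! j) * det_sub f rs (take j cs @ drop (Suc j) cs)"
      unfolding cofactor_def det_sub_def using j by simp
  qed
  finally show ?thesis .
qed

lemma det_sub_zero_col:
  assumes "c \<in> set cs" "\<And>r. r \<in> set rs \<Longrightarrow> f r c = 0" "length cs = length rs"
  shows "det_sub f rs cs = 0"
proof -
  let ?m = "length rs"
  let ?A = "mat ?m ?m (\<lambda>(a, b). f (rs ! a) (cs ! b))"
  obtain j where j: "j < ?m" "cs ! j = c" using assms(1,3) by (metis in_set_conv_nth)
  have "det_sub f rs cs = (\<Sum>i<?m. ?A $$ (i, j) * cofactor ?A i j)"
    unfolding det_sub_def by (rule laplace_expansion_column[OF _ j(1)]) simp
  also have "\<dots> = 0" using j assms(2) by (intro sum.neutral) auto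
  finally show ?thesis .
qed

lemma rev_perm_permutes: "rev_perm m permutes {0..<m}"
proof -
  have "rev_perm m \<circ> rev_perm m = id" unfolding rev_perm_def by (auto simp: fun_eq_iff)
  then have "bij (rev_perm m)" using o_bij by blast
  then show ?thesis unfolding permutes_def rev_perm_def by (auto simp: bij_iff)
qed

lemma det_sub_rev_cols:
  assumes "length cs = length rs"
  shows "det_sub f rs (rev cs) = signof (rev_perm (length rs)) * det_sub f rs cs"
proof -
  let ?m = "length rs"
  let ?B = "mat ?m ?m (\<lambda>(a, b). f (rs ! a) (cs ! b))"
  let ?A = "mat ?m ?m (\<lambda>(a, b). f (rs ! a) (rev cs ! b))"
  have "transpose_mat ?A = mat ?m ?m (\<lambda>(i, j). transpose_mat ?B $$ (rev_perm ?m i, j))"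
    using assms by (intro eq_matI) (auto simp: rev_perm_def rev_nth)
  then have "det (transpose_mat ?A) = signof (rev_perm ?m) * det (transpose_mat ?B)"
    using det_permute_rows[OF _ rev_perm_permutes, of "transpose_mat ?B"] by simp
  then show ?thesis unfolding det_sub_def by (metis det_transpose mat_carrier)
qed

lemma det_sub_mult:
  assumes T: "finite (T :: nat set)" and len: "card T = length rs" "length cs = length rs"
    and eq: "\<And>r c. r \<in> set rs \<Longrightarrow> c \<in> set cs \<Longrightarrow> f r c = (\<Sum>t\<in>T. g r t * h t c)"
  shows "det_sub f rs cs = det_sub g rs (sorted_list_of_set T) * det_sub h (sorted_list_of_set T) cs"
proof -
  let ?m = "length rs"
  let ?ts = "sorted_list_of_set T"
  let ?G = "mat ?m ?m (\<lambda>(a, b). g (rs ! a) (?ts ! b))"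
  let ?H = "mat ?m ?m (\<lambda>(a, b). h (?ts ! a) (cs ! b))"
  have lt: "length ?ts = ?m" using T len by simp
  have bij: "bij_betw ((!) ?ts) {..<?m} T" using T lt by (intro bij_betw_nth) auto
  have "mat ?m ?m (\<lambda>(a, b). f (rs ! a) (cs ! b)) = ?G * ?H"
  proof (rule eq_matI)
    fix a b assume "a < dim_row (?G * ?H)" "b < dim_col (?G * ?H)"
    then have a: "a < ?m" and b: "b < ?m" by auto
    have "(?G * ?H) $$ (a, b) = (\<Sum>i<?m. g (rs ! a) (?ts ! i) * h (?ts ! i) (cs ! b))"
      using a b by (simp add: scalar_prod_def atLeast0LessThan)
    also have "\<dots> = (\<Sum>t\<in>T. g (rs ! a) t * h t (cs ! b))"
      using sum.reindex_bij_betw[OF bij, of "\<lambda>t. g (rs ! a) t * h t (cs ! b)"] by simp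
    also have "\<dots> = f (rs ! a) (cs ! b)" using eq a b len by simp
    finally show "mat ?m ?m (\<lambda>(a, b). f (rs ! a) (cs ! b)) $$ (a, b) = (?G * ?H) $$ (a, b)"
      using a b by simp
  qed auto
  then have "det_sub f rs cs = det (?G * ?H)" unfolding det_sub_def by simp
  also have "\<dots> = det ?G * det ?H" by (rule det_mult) auto
  finally show ?thesis unfolding det_sub_def lt by simp
qed

lemma det_sub_of_bool_eq:
  assumes A: "finite A" and B: "finite B" and c: "card A = card (B :: nat set)"
  shows "det_sub (\<lambda>r c. of_bool (r = c)) (sorted_list_of_set A) (sorted_list_of_set B)
       = (of_bool (A = B) :: 'a::comm_ring_1)"
proof (cases "A = B")
  case True
  let ?xs = "sorted_list_of_set A"
  have "mat (length ?xs) (length ?xs) (\<lambda>(a, b). of_bool (?xs ! a = ?xs ! b)) = (1\<^sub>m (length ?xs) :: 'a mat)"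
    using A by (intro eq_matI) (auto simp: nth_eq_iff_index_eq)
  then show ?thesis unfolding det_sub_def using True by simp
next
  case False
  then obtain b where b: "b \<in> B" "b \<notin> A" using A B c by (metis card_subset_eq subsetI)
  have "det_sub (\<lambda>r c. of_bool (r = c)) (sorted_list_of_set A) (sorted_list_of_set B) = (0 :: 'a)"
    by (rule det_sub_zero_col[where c = b]) (use A B b c in auto)
  then show ?thesis using False by simp
qed

section \<open>Laplace expansion along several rows\<close>

definition position :: "nat set \<Rightarrow> nat \<Rightarrow> nat" where
  "position S c = card {s\<in>S. s < c}"

lemma sorted_list_of_set_nth_less_iff:
  assumes "finite S" "i < card S" "j < card S"
  shows "sorted_list_of_set S ! i < sorted_list_of_set S ! j \<longleftrightarrow> i < j"
proof -
  let ?xs = "sorted_list_of_set S"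
  have "sorted_wrt (<) ?xs" using assms(1) by simp
  then have "i < j \<Longrightarrow> ?xs ! i < ?xs ! j" using assms by (simp add: sorted_wrt_iff_nth_less)
  moreover have "j \<le> i \<Longrightarrow> ?xs ! j \<le> ?xs ! i" using assms by (simp add: sorted_nth_mono)
  ultimately show ?thesis by (meson leD not_less)
qed

lemma position_nth:
  assumes S: "finite S" and j: "j < card S"
  shows "position S (sorted_list_of_set S ! j) = j"
proof -
  let ?xs = "sorted_list_of_set S"
  have bij: "bij_betw ((!) ?xs) {..<card S} S" using S by (intro bij_betw_nth) auto
  have "{s\<in>S. s < ?xs ! j} = (!) ?xs ` {..<j}"
  proof (intro equalityI subsetI)
    fix s assume s: "s \<in> {s\<in>S. s < ?xs ! j}"
    then have "s \<in> (!) ?xs ` {..<card S}" using bij by (simp add: bij_betw_def)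
    then obtain i where i: "i < card S" "s = ?xs ! i" by blast
    then show "s \<in> (!) ?xs ` {..<j}" using s sorted_list_of_set_nth_less_iff[OF S i(1) j] by auto
  next
    fix s assume "s \<in> (!) ?xs ` {..<j}"
    then obtain i where i: "i < j" "s = ?xs ! i" by auto
    moreover have "?xs ! i \<in> S"
      using S i j by (metis nth_mem order.strict_trans length_sorted_list_of_set set_sorted_list_of_set)
    ultimately show "s \<in> {s\<in>S. s < ?xs ! j}"
      using j sorted_list_of_set_nth_less_iff[OF S _ j] by auto
  qed
  moreover have "inj_on ((!) ?xs) {..<j}"
    using bij j by (auto simp: bij_betw_def intro: inj_on_subset)
  ultimately show ?thesis unfolding position_def by (simp add: card_image)
qed

lemma nth_position:
  assumes "finite S" "s \<in> S"
  shows "position S s < card S" "sorted_list_of_set S ! position S s = s"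
proof -
  obtain i where "i < card S" "s = sorted_list_of_set S ! i"
    using assms by (metis in_set_conv_nth length_sorted_list_of_set set_sorted_list_of_set)
  then show "position S s < card S" "sorted_list_of_set S ! position S s = s"
    using position_nth[OF assms(1)] by auto
qed

lemma position_Diff_singleton:
  assumes "finite S" "s \<in> S" "c \<in> S" "c \<noteq> s"
  shows "position S c = position (S - {s}) c + of_bool (s < c)"
proof -
  have "{x\<in>S. x < c} = (if s < c then insert s {x\<in>S - {s}. x < c} else {x\<in>S - {s}. x < c})"
    using assms by auto
  then show ?thesis unfolding position_def using assms(1) by simp
qed

lemma sorted_list_of_set_remove_nth:
  assumes "finite S" "j < card S"
  shows "take j (sorted_list_of_set S) @ drop (Suc j) (sorted_list_of_set S)
       = sorted_list_of_set (S - {sorted_list_of_set S ! j})"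
proof -
  let ?xs = "sorted_list_of_set S"
  have split: "?xs = take j ?xs @ ?xs ! j # drop (Suc j) ?xs"
    using assms by (simp add: id_take_nth_drop)
  moreover have "?xs ! j \<notin> set (take j ?xs)"
    using split distinct_sorted_list_of_set[of S] by (metis distinct_append distinct.simps(2) disjoint_iff list.set_intros(1))
  ultimately have "remove1 (?xs ! j) ?xs = take j ?xs @ drop (Suc j) ?xs"
    by (metis remove1.simps(2) remove1_append)
  then show ?thesis using assms(1) by (simp add: sorted_list_of_set_remove)
qed

lemma det_sub_expand_first_row_set:
  assumes S: "finite S" and len: "Suc (length rs) = card S"
  shows "det_sub f (r # rs) (sorted_list_of_set S) = (\<Sum>s\<in>S.
           (-1) ^ position S s * f r s * det_sub f rs (sorted_list_of_set (S - {s})))"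
proof -
  let ?xs = "sorted_list_of_set S"
  have "det_sub f (r # rs) ?xs = (\<Sum>j<card S.
          (-1) ^ j * f r (?xs ! j) * det_sub f rs (take j ?xs @ drop (Suc j) ?xs))"
    using det_sub_expand_first_row[of ?xs rs] S len by simp
  also have "\<dots> = (\<Sum>s\<in>S. (-1) ^ position S s * f r s * det_sub f rs (sorted_list_of_set (S - {s})))"
  proof (rule sum.reindex_bij_witness[where i = "position S" and j = "(!) ?xs"])
    fix j assume "j \<in> {..<card S}"
    then have j: "j < card S" by simp
    show "position S (?xs ! j) = j" by (rule position_nth[OF S j])
    show "?xs ! j \<in> S" using j S by (metis nth_mem length_sorted_list_of_set set_sorted_list_of_set)
    show "(-1) ^ position S (?xs ! j) * f r (?xs ! j) * det_sub f rs (sorted_list_of_set (S - {?xs ! j}))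
        = (-1) ^ j * f r (?xs ! j) * det_sub f rs (take j ?xs @ drop (Suc j) ?xs)"
      using position_nth[OF S j] sorted_list_of_set_remove_nth[OF S j] by simp
  qed (use nth_position[OF S] in auto)
  finally show ?thesis .
qed

text \<open>The sign of the term for the column set \<open>C\<close> in the Laplace expansion along the first \<open>card C\<close>
  rows, usually written \<open>(-1) ^ (\<Sum>c\<in>C. (position S c + 1) + (1 + \<dots> + card C))\<close>; the exponent here
  differs from that one by \<open>2 * card C\<close>.\<close>
definition laplace_sign :: "nat set \<Rightarrow> nat set \<Rightarrow> 'a::comm_ring_1" where
  "laplace_sign S C = (-1) ^ ((\<Sum>c\<in>C. position S c) + card C * (card C - 1) div 2)"

lemma laplace_sign_remove:
  assumes S: "finite S" and CS: "C \<subseteq> S" and s: "s \<in> C"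
  shows "(-1) ^ position S s * laplace_sign (S - {s}) (C - {s}) = laplace_sign S C * (-1) ^ position C s"
proof -
  define k where "k = card C - 1"
  have C: "finite C" using S CS finite_subset by blast
  have cC: "card C = Suc k" "card (C - {s}) = k"
    using C s card_gt_0_iff[of C] unfolding k_def by auto
  have sum_C: "(\<Sum>c\<in>C. position S c) = position S s + (\<Sum>c\<in>C-{s}. position (S - {s}) c)
      + card {c\<in>C-{s}. s < c}"
  proof -
    have "(\<Sum>c\<in>C-{s}. position S c) = (\<Sum>c\<in>C-{s}. position (S - {s}) c + of_bool (s < c))"
      using CS s by (intro sum.cong refl position_Diff_singleton[OF S]) auto
    also have "\<dots> = (\<Sum>c\<in>C-{s}. position (S - {s}) c) + card {c\<in>C-{s}. s < c}"
      using C by (simp add: sum.distrib sum.If_cases Int_def)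
    finally show ?thesis using C s by (simp add: sum.remove)
  qed
  have split_k: "card {c\<in>C-{s}. s < c} + position C s = k"
  proof -
    have "C - {s} = {c\<in>C-{s}. s < c} \<union> {c\<in>C. c < s}" "{c\<in>C-{s}. s < c} \<inter> {c\<in>C. c < s} = {}"
      by auto
    then have "card (C - {s}) = card {c\<in>C-{s}. s < c} + card {c\<in>C. c < s}"
      using C by (metis (no_types, lifting) card_Un_disjoint finite_Diff finite_Un)
    then show ?thesis unfolding position_def using cC by simp
  qed
  have tri: "Suc k * k div 2 = k * (k - 1) div 2 + k"
  proof (cases k)
    case (Suc m)
    then have "Suc k * k = k * (k - 1) + 2 * k" by (simp add: algebra_simps)
    then show ?thesis by simp
  qed simp
  have "(\<Sum>c\<in>C. position S c) + Suc k * k div 2 + position C s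
      = position S s + ((\<Sum>c\<in>C-{s}. position (S - {s}) c) + k * (k - 1) div 2) + 2 * k"
    unfolding sum_C tri using split_k by linarith
  then have "(-1 :: 'a) ^ ((\<Sum>c\<in>C. position S c) + Suc k * k div 2) * (-1) ^ position C s
      = (-1) ^ (position S s + ((\<Sum>c\<in>C-{s}. position (S - {s}) c) + k * (k - 1) div 2)) * (-1) ^ (2 * k)"
    by (metis power_add)
  then show ?thesis unfolding laplace_sign_def cC by (simp add: power_add power_mult)
qed

lemma sum_subsets_pick_one:
  assumes S: "finite S"
  shows "(\<Sum>s\<in>S. \<Sum>C\<in>{C. C \<subseteq> S - {s} \<and> card C = k}. g s C)
       = (\<Sum>C\<in>{C. C \<subseteq> S \<and> card C = Suc k}. \<Sum>s\<in>C. g s (C - {s}))"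
proof -
  have "(\<Sum>s\<in>S. \<Sum>C\<in>{C. C \<subseteq> S - {s} \<and> card C = k}. g s C)
      = (\<Sum>(s, C)\<in>Sigma S (\<lambda>s. {C. C \<subseteq> S - {s} \<and> card C = k}). g s C)"
    using S by (intro sum.Sigma) auto
  also have "\<dots> = (\<Sum>(C, s)\<in>Sigma {C. C \<subseteq> S \<and> card C = Suc k} (\<lambda>C. C). g s (C - {s}))"
  proof (rule sum.reindex_bij_witness[where j = "\<lambda>(s, C). (insert s C, s)" and i = "\<lambda>(C, s). (s, C - {s})"])
    fix b assume "b \<in> Sigma {C. C \<subseteq> S \<and> card C = Suc k} (\<lambda>C. C)"
    moreover obtain C s where b: "b = (C, s)" by (cases b)
    moreover have "finite C" using calculation S by (auto intro: finite_subset)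
    ultimately show "(case (case b of (C, s) \<Rightarrow> (s, C - {s})) of (s, C) \<Rightarrow> (insert s C, s)) = b"
      and "(case b of (C, s) \<Rightarrow> (s, C - {s})) \<in> Sigma S (\<lambda>s. {C. C \<subseteq> S - {s} \<and> card C = k})"
      by auto
  next
    fix a assume "a \<in> Sigma S (\<lambda>s. {C. C \<subseteq> S - {s} \<and> card C = k})"
    moreover obtain s C where a: "a = (s, C)" by (cases a)
    moreover have "finite C" "insert s C - {s} = C" using calculation S by (auto intro: finite_subset)
    ultimately show "(case (case a of (s, C) \<Rightarrow> (insert s C, s)) of (C, s) \<Rightarrow> (s, C - {s})) = a"
      and "(case a of (s, C) \<Rightarrow> (insert s C, s)) \<in> Sigma {C. C \<subseteq> S \<and> card C = Suc k} (\<lambda>C. C)"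
      and "(case (case a of (s, C) \<Rightarrow> (insert s C, s)) of (C, s) \<Rightarrow> g s (C - {s})) = (case a of (s, C) \<Rightarrow> g s C)"
      by (auto simp: card_insert_if)
  qed
  also have "\<dots> = (\<Sum>C\<in>{C. C \<subseteq> S \<and> card C = Suc k}. \<Sum>s\<in>C. g s (C - {s}))"
    using S by (intro sum.Sigma[symmetric]) (auto intro: finite_subset)
  finally show ?thesis .
qed

lemma laplace_sign_det_sub_expand_first_row:
  assumes S: "finite S" and CS: "C \<subseteq> S" and len: "Suc (length rs) = card C"
  shows "laplace_sign S C * det_sub f (r # rs) (sorted_list_of_set C)
       = (\<Sum>s\<in>C. (-1) ^ position S s * f r s
            * (laplace_sign (S - {s}) (C - {s}) * det_sub f rs (sorted_list_of_set (C - {s}))))"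
proof -
  have C: "finite C" using CS S finite_subset by blast
  have "laplace_sign S C * det_sub f (r # rs) (sorted_list_of_set C)
      = (\<Sum>s\<in>C. (laplace_sign S C * (-1) ^ position C s) * f r s * det_sub f rs (sorted_list_of_set (C - {s})))"
    unfolding det_sub_expand_first_row_set[OF C len] by (simp add: sum_distrib_left algebra_simps)
  also have "\<dots> = (\<Sum>s\<in>C. (-1) ^ position S s * f r s
      * (laplace_sign (S - {s}) (C - {s}) * det_sub f rs (sorted_list_of_set (C - {s}))))"
    by (intro sum.cong refl) (simp add: laplace_sign_remove[OF S CS, symmetric] algebra_simps)
  finally show ?thesis .
qed

lemma det_sub_laplace:
  fixes f :: "'r \<Rightarrow> nat \<Rightarrow> 'a::comm_ring_1"
  assumes "finite S" "length rs = card S" "k \<le> card S"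
  shows "det_sub f rs (sorted_list_of_set S) = (\<Sum>C\<in>{C. C \<subseteq> S \<and> card C = k}.
           laplace_sign S C * det_sub f (take k rs) (sorted_list_of_set C)
             * det_sub f (drop k rs) (sorted_list_of_set (S - C)))"
  using assms
proof (induction k arbitrary: rs S)
  case 0
  then have "{C. C \<subseteq> S \<and> card C = 0} = {{}}" by (auto simp: rev_finite_subset)
  then show ?case by (simp add: laplace_sign_def)
next
  case (Suc k)
  note S = Suc.prems(1)
  obtain r rs' where rs: "rs = r # rs'" using Suc.prems by (cases rs) auto
  define T where "T = (\<lambda>s C. (-1) ^ position S s * f r s * (laplace_sign (S - {s}) C
      * det_sub f (take k rs') (sorted_list_of_set C)) * det_sub f (drop k rs') (sorted_list_of_set (S - {s} - C)))"
  have "det_sub f rs (sorted_list_of_set S) = (\<Sum>s\<in>S.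
          (-1) ^ position S s * f r s * det_sub f rs' (sorted_list_of_set (S - {s})))"
    using det_sub_expand_first_row_set[OF S, of rs'] Suc.prems(2) rs by simp
  also have "\<dots> = (\<Sum>s\<in>S. \<Sum>C\<in>{C. C \<subseteq> S - {s} \<and> card C = k}. T s C)"
    unfolding T_def using Suc.prems rs by (intro sum.cong refl) (simp add: Suc.IH sum_distrib_left algebra_simps)
  also have "\<dots> = (\<Sum>C\<in>{C. C \<subseteq> S \<and> card C = Suc k}. \<Sum>s\<in>C. T s (C - {s}))"
    by (rule sum_subsets_pick_one[OF S])
  also have "\<dots> = (\<Sum>C\<in>{C. C \<subseteq> S \<and> card C = Suc k}. laplace_sign S C
      * det_sub f (r # take k rs') (sorted_list_of_set C) * det_sub f (drop k rs') (sorted_list_of_set (S - C)))"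
  proof (intro sum.cong refl)
    fix C assume "C \<in> {C. C \<subseteq> S \<and> card C = Suc k}"
    then have CS: "C \<subseteq> S" and len: "Suc (length (take k rs')) = card C" using Suc.prems rs by auto
    have "S - {s} - (C - {s}) = S - C" if "s \<in> C" for s using that by auto
    then show "(\<Sum>s\<in>C. T s (C - {s})) = laplace_sign S C * det_sub f (r # take k rs') (sorted_list_of_set C)
        * det_sub f (drop k rs') (sorted_list_of_set (S - C))"
      unfolding T_def laplace_sign_det_sub_expand_first_row[OF S CS len] sum_distrib_right
      by (intro sum.cong refl) simp
  qed
  finally show ?case using rs by simp
qed

lemma det_sub_append_rows:
  assumes "finite S" "length rs + length qs = card S"
  shows "det_sub (case_sum f g) (map Inl rs @ map Inr qs) (sorted_list_of_set S)
       = (\<Sum>C\<in>{C. C \<subseteq> S \<and> card C = length rs}.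
           laplace_sign S C * det_sub f rs (sorted_list_of_set C) * det_sub g qs (sorted_list_of_set (S - C)))"
  using det_sub_laplace[of S "map Inl rs @ map Inr qs" "length rs" "case_sum f g"] assms
  by (simp add: det_sub_map_rows)

lemma det_sub_append_unit_rows:
  fixes f :: "'r \<Rightarrow> nat \<Rightarrow> 'a::comm_ring_1"
  assumes S: "finite S" and TS: "T \<subseteq> S" and len: "length rs = card T"
  shows "det_sub (case_sum f (\<lambda>r c. of_bool (r = c))) (map Inl rs @ map Inr (sorted_list_of_set (S - T)))
           (sorted_list_of_set S)
       = laplace_sign S T * det_sub f rs (sorted_list_of_set T)"
proof -
  have T: "finite T" using S TS finite_subset by blast
  have unit: "det_sub (\<lambda>r c. of_bool (r = c)) (sorted_list_of_set (S - T)) (sorted_list_of_set (S - C))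
      = (of_bool (C = T) :: 'a)" if "C \<in> {C. C \<subseteq> S \<and> card C = card T}" for C
  proof -
    have "card (S - C) = card (S - T)" "S - T = S - C \<longleftrightarrow> C = T"
      using that S TS T by (auto simp: card_Diff_subset finite_subset)
    then show ?thesis using det_sub_of_bool_eq[of "S - T" "S - C"] S by simp
  qed
  have len': "length rs + length (sorted_list_of_set (S - T)) = card S"
    using S TS T len by (simp add: card_Diff_subset card_mono)
  have "det_sub (case_sum f (\<lambda>r c. of_bool (r = c))) (map Inl rs @ map Inr (sorted_list_of_set (S - T)))
         (sorted_list_of_set S)
      = (\<Sum>C\<in>{C. C \<subseteq> S \<and> card C = card T}. laplace_sign S C * det_sub f rs (sorted_list_of_set C)
          * det_sub (\<lambda>r c. of_bool (r = c)) (sorted_list_of_set (S - T)) (sorted_list_of_set (S - C)))"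
    using det_sub_append_rows[OF S len'] len by simp
  also have "\<dots> = (\<Sum>C\<in>{C. C \<subseteq> S \<and> card C = card T}.
      if C = T then laplace_sign S C * det_sub f rs (sorted_list_of_set C) else 0)"
    using unit by (intro sum.cong) auto
  also have "\<dots> = laplace_sign S T * det_sub f rs (sorted_list_of_set T)"
    using S TS by (simp add: sum.delta')
  finally show ?thesis .
qed

section \<open>Complete homogeneous symmetric polynomials and Newton interpolation\<close>

definition exponent_vectors :: "nat set \<Rightarrow> nat \<Rightarrow> (nat \<Rightarrow> nat) set" where
  "exponent_vectors S d = {m. (\<forall>s. s \<notin> S \<longrightarrow> m s = 0) \<and> sum m S = d}"

definition hom_sym :: "(nat \<Rightarrow> 'a::comm_ring_1) \<Rightarrow> nat set \<Rightarrow> nat \<Rightarrow> 'a" where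
  "hom_sym y S d = (\<Sum>m\<in>exponent_vectors S d. \<Prod>s\<in>S. y s ^ m s)"

lemma hsq_eq_hom_sym: "hsq x S r = (if r < 0 then 0 else hom_sym (\<lambda>s. x s ^ 2) S (nat r))"
  unfolding hsq_def hom_sym_def exponent_vectors_def by simp

lemma finite_exponent_vectors:
  assumes S: "finite S"
  shows "finite (exponent_vectors S d)"
proof -
  have "exponent_vectors S d \<subseteq> (\<lambda>f s. if s \<in> S then f s else 0) ` PiE S (\<lambda>_. {..d})"
  proof
    fix m assume m: "m \<in> exponent_vectors S d"
    then have "m s \<le> d" if "s \<in> S" for s
      using that S unfolding exponent_vectors_def by (metis (mono_tags, lifting) mem_Collect_eq member_le_sum zero_le)
    then have "restrict m S \<in> PiE S (\<lambda>_. {..d})" by auto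
    moreover have "m = (\<lambda>s. if s \<in> S then restrict m S s else 0)" using m unfolding exponent_vectors_def by auto
    ultimately show "m \<in> (\<lambda>f s. if s \<in> S then f s else 0) ` PiE S (\<lambda>_. {..d})" by blast
  qed
  moreover have "finite (PiE S (\<lambda>_. {..d}))" using S by (simp add: finite_PiE)
  ultimately show ?thesis by (meson finite_imageI finite_subset)
qed

lemma hom_sym_0: "finite S \<Longrightarrow> hom_sym y S 0 = 1"
proof -
  assume "finite S"
  then have "exponent_vectors S 0 = {\<lambda>_. 0}" unfolding exponent_vectors_def by (auto simp: fun_eq_iff)
  then show ?thesis unfolding hom_sym_def by simp
qed

lemma hom_sym_empty: "hom_sym y {} d = of_bool (d = 0)"
proof -
  have "exponent_vectors {} d = (if d = 0 then {\<lambda>_. 0} else {})"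
    unfolding exponent_vectors_def by (auto simp: fun_eq_iff)
  then show ?thesis unfolding hom_sym_def by simp
qed

lemma exponent_vectors_insert_vanishing:
  assumes "finite S" "a \<notin> S"
  shows "{m\<in>exponent_vectors (insert a S) d. m a = 0} = exponent_vectors S d"
  using assms unfolding exponent_vectors_def by (auto split: if_splits) (metis insertE)

lemma sum_exponent_vectors_insert_nonvanishing:
  assumes S: "finite S" and a: "a \<notin> S" and d: "d \<ge> 1"
  shows "(\<Sum>m\<in>{m\<in>exponent_vectors (insert a S) d. m a \<noteq> 0}. \<Prod>s\<in>insert a S. y s ^ m s)
       = y a * hom_sym y (insert a S) (d - 1)"
proof -
  let ?g = "\<lambda>m. \<Prod>s\<in>insert a S. y s ^ m s"
  have sum_upd: "sum (m(a := v)) (insert a S) = v + sum m S" for m :: "nat \<Rightarrow> nat" and v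
  proof -
    have "sum (m(a := v)) S = sum m S" using a by (intro sum.cong) auto
    then show ?thesis using S a by simp
  qed
  have prod_upd: "?g (m(a := v)) = y a ^ v * (\<Prod>s\<in>S. y s ^ m s)" for m :: "nat \<Rightarrow> nat" and v
  proof -
    have "(\<Prod>s\<in>S. y s ^ (m(a := v)) s) = (\<Prod>s\<in>S. y s ^ m s)" using a by (intro prod.cong) auto
    then show ?thesis using S a by simp
  qed
  have sum_m: "sum m (insert a S) = m a + sum m S" for m using S a by simp
  have "(\<Sum>m\<in>{m\<in>exponent_vectors (insert a S) d. m a \<noteq> 0}. ?g m)
      = (\<Sum>m\<in>exponent_vectors (insert a S) (d - 1). y a * ?g m)"
  proof (rule sum.reindex_bij_witness[where j = "\<lambda>m. m(a := m a - 1)" and i = "\<lambda>m. m(a := m a + 1)"])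
    fix m assume "m \<in> {m\<in>exponent_vectors (insert a S) d. m a \<noteq> 0}"
    then have m: "m a + sum m S = d" "\<forall>s. s \<notin> insert a S \<longrightarrow> m s = 0" "m a \<noteq> 0"
      unfolding exponent_vectors_def by (simp_all add: sum_m)
    show "(m(a := m a - 1))(a := (m(a := m a - 1)) a + 1) = m" using m by auto
    show "m(a := m a - 1) \<in> exponent_vectors (insert a S) (d - 1)"
      using m unfolding exponent_vectors_def mem_Collect_eq sum_upd by auto
    have "y a ^ m a = y a * y a ^ (m a - 1)" using m by (cases "m a") auto
    then show "y a * ?g (m(a := m a - 1)) = ?g m"
      using prod_upd[of m "m a - 1"] prod_upd[of m "m a"] by simp
  next
    fix m assume "m \<in> exponent_vectors (insert a S) (d - 1)"
    then have m: "m a + sum m S = d - 1" "\<forall>s. s \<notin> insert a S \<longrightarrow> m s = 0"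
      unfolding exponent_vectors_def by (simp_all add: sum_m)
    show "(m(a := m a + 1))(a := (m(a := m a + 1)) a - 1) = m" by auto
    show "m(a := m a + 1) \<in> {m\<in>exponent_vectors (insert a S) d. m a \<noteq> 0}"
      using m d unfolding exponent_vectors_def mem_Collect_eq sum_upd by auto
  qed
  then show ?thesis unfolding hom_sym_def by (simp add: sum_distrib_left)
qed

lemma hom_sym_insert:
  assumes S: "finite S" and a: "a \<notin> S" and d: "d \<ge> 1"
  shows "hom_sym y (insert a S) d = hom_sym y S d + y a * hom_sym y (insert a S) (d - 1)"
proof -
  let ?F = "exponent_vectors (insert a S) d"
  let ?g = "\<lambda>m. \<Prod>s\<in>insert a S. y s ^ m s"
  have vanishing: "sum ?g {m\<in>?F. m a = 0} = hom_sym y S d"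
    unfolding exponent_vectors_insert_vanishing[OF S a] hom_sym_def
    using S a by (intro sum.cong refl) (simp add: exponent_vectors_def)
  have "hom_sym y (insert a S) d = sum ?g ({m\<in>?F. m a = 0} \<union> {m\<in>?F. m a \<noteq> 0})"
    unfolding hom_sym_def by (rule arg_cong[where f = "sum ?g"]) auto
  also have "\<dots> = sum ?g {m\<in>?F. m a = 0} + sum ?g {m\<in>?F. m a \<noteq> 0}"
    using S finite_exponent_vectors[of "insert a S" d] by (intro sum.union_disjoint) auto
  finally show ?thesis unfolding vanishing sum_exponent_vectors_insert_nonvanishing[OF S a d] .
qed

lemma hsq_neg: "r < 0 \<Longrightarrow> hsq x S r = 0"
  by (simp add: hsq_eq_hom_sym)

lemma hsq_0: "finite S \<Longrightarrow> hsq x S 0 = 1"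
  by (simp add: hsq_eq_hom_sym hom_sym_0)

lemma hsq_atLeastAtMost_rec:
  assumes j: "j \<le> n"
  shows "hsq x {j..n} r = hsq x {Suc j..n} r + x j ^ 2 * hsq x {j..n} (r - 1)"
proof -
  have ins: "{j..n} = insert j {Suc j..n}" using j by auto
  consider "r < 0" | "r = 0" | "r \<ge> 1" by linarith
  then show ?thesis
  proof cases
    case 3
    then have "nat (r - 1) = nat r - 1" by simp
    then show ?thesis using 3 hom_sym_insert[of "{Suc j..n}" j "nat r" "\<lambda>s. x s ^ 2"] unfolding ins
      by (simp add: hsq_eq_hom_sym)
  qed (simp_all add: hsq_eq_hom_sym hom_sym_0)
qed

definition newton_basis :: "nat \<Rightarrow> (nat \<Rightarrow> 'a::comm_ring_1) \<Rightarrow> 'a \<Rightarrow> nat \<Rightarrow> 'a" where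
  "newton_basis n x t j = (\<Prod>l\<in>{j<..n}. t - x l ^ 2)"

lemma newton_basis_step:
  assumes "1 \<le> j" "j \<le> n"
  shows "newton_basis n x t (j - 1) = (t - x j ^ 2) * newton_basis n x t j"
proof -
  have "{j - 1<..n} = insert j {j<..n}" using assms by auto
  then show ?thesis unfolding newton_basis_def by simp
qed

lemma hsq_generating_step:
  assumes "j \<le> n" "c \<le> int d"
  shows "(\<Sum>e\<le>d. hsq x {Suc j..n} (c - int e) * t ^ e)
       = hsq x {j..n} c + (t - x j ^ 2) * (\<Sum>e\<le>d. hsq x {j..n} (c - 1 - int e) * t ^ e)"
proof -
  let ?h = "hsq x {j..n}"
  let ?R = "\<Sum>e\<le>d. ?h (c - 1 - int e) * t ^ e"
  have rec: "hsq x {Suc j..n} r = ?h r - x j ^ 2 * ?h (r - 1)" for r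
    using hsq_atLeastAtMost_rec[OF assms(1), of x r] by simp
  have "(\<Sum>e\<le>d. hsq x {Suc j..n} (c - int e) * t ^ e)
      = (\<Sum>e\<le>d. ?h (c - int e) * t ^ e - x j ^ 2 * (?h (c - 1 - int e) * t ^ e))"
    by (intro sum.cong refl) (simp only: rec, simp add: algebra_simps)
  also have "\<dots> = (\<Sum>e\<le>d. ?h (c - int e) * t ^ e) - x j ^ 2 * ?R"
    by (simp add: sum_subtractf sum_distrib_left)
  also have "(\<Sum>e\<le>d. ?h (c - int e) * t ^ e) = (\<Sum>e\<le>Suc d. ?h (c - int e) * t ^ e)"
    using assms(2) by (simp add: hsq_neg)
  also have "\<dots> = ?h c + t * ?R"
    unfolding sum.atMost_Suc_shift by (simp add: sum_distrib_left algebra_simps)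
  finally show ?thesis by (simp add: algebra_simps)
qed

lemma power_newton_partial:
  assumes "q \<le> n"
  shows "t ^ d = (\<Sum>j\<in>{n+1-q..n}. newton_basis n x t j * hsq x {j..n} (int j + int d - int n))
     + newton_basis n x t (n - q) * (\<Sum>e\<le>d. hsq x {n+1-q..n} (int (n - q) + int d - int n - int e) * t ^ e)"
  using assms
proof (induction q)
  case 0
  have "(\<Sum>e\<le>d. hsq x {n+1..n} (int n + int d - int n - int e) * t ^ e) = (\<Sum>e\<le>d. of_bool (e = d) * t ^ e)"
    by (intro sum.cong refl) (auto simp: hsq_eq_hom_sym hom_sym_empty)
  then show ?case unfolding newton_basis_def by simp
next
  case (Suc q)
  define j where "j = n - q"
  have j: "1 \<le> j" "j \<le> n" "n + 1 - Suc q = j" "n - Suc q = j - 1" "n + 1 - q = Suc j" "Suc n - q = Suc j" "n - q = j"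
    using Suc.prems unfolding j_def by auto
  define D where "D = int j + int d - int n"
  let ?N = "newton_basis n x t"
  let ?R = "\<Sum>e\<le>d. hsq x {j..n} (D - 1 - int e) * t ^ e"
  have "?N (n - q) * (\<Sum>e\<le>d. hsq x {n+1-q..n} (int (n - q) + int d - int n - int e) * t ^ e)
      = ?N j * (\<Sum>e\<le>d. hsq x {Suc j..n} (D - int e) * t ^ e)"
    unfolding D_def j by (simp add: algebra_simps)
  also have "\<dots> = ?N j * (hsq x {j..n} D + (t - x j ^ 2) * ?R)"
    using j(2) by (simp add: hsq_generating_step D_def)
  also have "\<dots> = ?N j * hsq x {j..n} D + ?N (j - 1) * ?R"
    unfolding newton_basis_step[OF j(1,2)] by (simp add: algebra_simps)
  also have "?R = (\<Sum>e\<le>d. hsq x {n+1-Suc q..n} (int (n - Suc q) + int d - int n - int e) * t ^ e)"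
    unfolding D_def j using j(1) by (intro sum.cong refl) (simp add: algebra_simps of_nat_diff)
  finally have "?N (n - q) * (\<Sum>e\<le>d. hsq x {n+1-q..n} (int (n - q) + int d - int n - int e) * t ^ e)
      = ?N j * hsq x {j..n} (int j + int d - int n)
        + ?N (n - Suc q) * (\<Sum>e\<le>d. hsq x {n+1-Suc q..n} (int (n - Suc q) + int d - int n - int e) * t ^ e)"
    unfolding D_def j .
  moreover have "(\<Sum>i\<in>{j..n}. newton_basis n x t i * hsq x {i..n} (int i + int d - int n))
      = newton_basis n x t j * hsq x {j..n} (int j + int d - int n)
        + (\<Sum>i\<in>{Suc j..n}. newton_basis n x t i * hsq x {i..n} (int i + int d - int n))"
    using j by (simp add: sum.atLeast_Suc_atMost)
  ultimately show ?case using Suc by (simp add: j)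
qed

lemma power_newton_expansion:
  assumes "d < n"
  shows "t ^ d = (\<Sum>j\<in>{1..n}. newton_basis n x t j * hsq x {j..n} (int j + int d - int n))"
proof -
  have "hsq x {1..n} (int (n - n) + int d - int n - int e) = 0" for e
    using assms by (intro hsq_neg) simp
  then show ?thesis using power_newton_partial[of n n t d x] by simp
qed

section \<open>Triangular minors\<close>

lemma det_sub_upper_triangular:
  assumes J: "finite J" and zero: "\<And>k j. k \<in> J \<Longrightarrow> j \<in> J \<Longrightarrow> j < k \<Longrightarrow> f k j = 0"
  shows "det_sub f (sorted_list_of_set J) (sorted_list_of_set J) = (\<Prod>j\<in>J. f j j)"
proof -
  let ?js = "sorted_list_of_set J"
  let ?A = "mat (card J) (card J) (\<lambda>(a, b). f (?js ! a) (?js ! b))"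
  have bij: "bij_betw ((!) ?js) {..<card J} J" using J by (intro bij_betw_nth) auto
  have mem: "?js ! a \<in> J" if "a < card J" for a using bij that by (auto simp: bij_betw_def)
  have "upper_triangular ?A"
  proof (rule upper_triangularI)
    fix a b assume "b < a" "a < dim_row ?A"
    then show "?A $$ (a, b) = 0"
      using zero mem sorted_list_of_set_nth_less_iff[OF J, of b a] by simp
  qed
  then have "det ?A = (\<Prod>a<card J. f (?js ! a) (?js ! a))"
    by (simp add: det_upper_triangular[of _ "card J"] prod_list_diag_prod atLeast0LessThan)
  also have "\<dots> = (\<Prod>j\<in>J. f j j)" using prod.reindex_bij_betw[OF bij, of "\<lambda>j. f j j"] by simp
  finally show ?thesis unfolding det_sub_def using J by simp
qed

lemma exists_not_in_le_nth:
  assumes J: "finite J" and s: "s < card J" and C: "card C = s" "C \<subseteq> J"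
  shows "\<exists>c\<in>J - C. c \<le> sorted_list_of_set J ! s"
proof -
  let ?js = "sorted_list_of_set J"
  have "\<not> set (take (Suc s) ?js) \<subseteq> C"
  proof
    assume "set (take (Suc s) ?js) \<subseteq> C"
    then have "card (set (take (Suc s) ?js)) \<le> s" using C J by (metis card_mono finite_subset)
    moreover have "card (set (take (Suc s) ?js)) = Suc s" using J s by (simp add: distinct_card)
    ultimately show False by simp
  qed
  then obtain c where c: "c \<in> set (take (Suc s) ?js)" "c \<notin> C" by blast
  then obtain t where t: "t < length (take (Suc s) ?js)" "take (Suc s) ?js ! t = c"
    by (meson in_set_conv_nth)
  then have "t \<le> s" "c = ?js ! t" by simp_all
  then have "c \<le> ?js ! s" using s J by (simp add: sorted_nth_mono)
  moreover have "c \<in> J" using in_set_takeD[OF c(1)] J by simp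
  ultimately show ?thesis using c(2) by blast
qed

lemma nth_le_mem_drop:
  assumes K: "finite K" and r: "r \<in> set (drop s (sorted_list_of_set K))"
  shows "sorted_list_of_set K ! s \<le> r"
proof -
  obtain u where u: "u < length (drop s (sorted_list_of_set K))" "drop s (sorted_list_of_set K) ! u = r"
    using r by (meson in_set_conv_nth)
  then have "s + u < card K" "r = sorted_list_of_set K ! (s + u)" using K by simp_all
  then show ?thesis using K by (simp add: sorted_nth_mono)
qed

text \<open>If the \<open>s\<close>-th row exceeds the \<open>s\<close>-th column, then in the Laplace expansion along the first
  \<open>s\<close> rows every complementary minor has a zero column.\<close>
lemma det_sub_upper_triangular_not_gale:
  assumes J: "finite J" and K: "finite K" and c: "card J = card K" and not_gale: "\<not> gale_le K J"
    and zero: "\<And>k j. k \<in> K \<Longrightarrow> j \<in> J \<Longrightarrow> j < k \<Longrightarrow> f k j = 0"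
  shows "det_sub f (sorted_list_of_set K) (sorted_list_of_set J) = 0"
proof -
  let ?js = "sorted_list_of_set J"
  let ?ks = "sorted_list_of_set K"
  obtain s where s: "s < card J" "?js ! s < ?ks ! s"
    using not_gale c unfolding gale_le_def by (auto simp: not_le)
  have "det_sub f ?ks ?js = (\<Sum>C\<in>{C. C \<subseteq> J \<and> card C = s}.
      laplace_sign J C * det_sub f (take s ?ks) (sorted_list_of_set C) * det_sub f (drop s ?ks) (sorted_list_of_set (J - C)))"
    using s K c by (intro det_sub_laplace[OF J]) auto
  also have "\<dots> = 0"
  proof (intro sum.neutral ballI)
    fix C assume "C \<in> {C. C \<subseteq> J \<and> card C = s}"
    then have CJ: "C \<subseteq> J" and cC: "card C = s" by auto
    obtain c0 where c0: "c0 \<in> J - C" "c0 \<le> ?js ! s" using exists_not_in_le_nth[OF J s(1) cC CJ] by blast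
    have "det_sub f (drop s ?ks) (sorted_list_of_set (J - C)) = 0"
    proof (rule det_sub_zero_col[where c = c0])
      show "c0 \<in> set (sorted_list_of_set (J - C))" using c0 J by simp
      show "f r c0 = 0" if r: "r \<in> set (drop s ?ks)" for r
      proof (rule zero)
        show "r \<in> K" using r K by (metis in_set_dropD set_sorted_list_of_set)
        show "c0 \<in> J" "c0 < r" using c0 s nth_le_mem_drop[OF K r] by auto
      qed
      show "length (sorted_list_of_set (J - C)) = length (drop s ?ks)"
        using J K CJ cC c by (simp add: card_Diff_subset finite_subset)
    qed
    then show "laplace_sign J C * det_sub f (take s ?ks) (sorted_list_of_set C)
        * det_sub f (drop s ?ks) (sorted_list_of_set (J - C)) = 0" by simp
  qed
  finally show ?thesis .
qed

section \<open>The factorisation of \<open>frakF\<close>\<close>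

definition newton_mat :: "nat \<Rightarrow> (nat \<Rightarrow> 'a::comm_ring_1) \<Rightarrow> nat \<Rightarrow> nat \<Rightarrow> 'a" where
  "newton_mat n x k j = x k * newton_basis n x (x k ^ 2) j"

lemma newton_mat_eq_0:
  assumes "j < k" "k \<le> n"
  shows "newton_mat n x k j = 0"
proof -
  have "k \<in> {j<..n}" using assms by simp
  then have "newton_basis n x (x k ^ 2) j = 0" unfolding newton_basis_def by (intro prod_zero) auto
  then show ?thesis unfolding newton_mat_def by simp
qed

lemma odd_power_eq_newton_mat_Hmat:
  assumes "1 \<le> i" "i \<le> n"
  shows "x k ^ (2 * i - 1) = (\<Sum>j\<in>{1..n}. newton_mat n x k j * Hmat n x j (n + 1 - i))"
proof -
  have "x k ^ (2 * i - 1) = x k * (x k ^ 2) ^ (i - 1)"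
    using assms by (cases i) (auto simp: power_mult[symmetric])
  also have "(x k ^ 2) ^ (i - 1)
      = (\<Sum>j\<in>{1..n}. newton_basis n x (x k ^ 2) j * hsq x {j..n} (int j + int (i - 1) - int n))"
    using assms by (intro power_newton_expansion) simp
  also have "\<dots> = (\<Sum>j\<in>{1..n}. newton_basis n x (x k ^ 2) j * Hmat n x j (n + 1 - i))"
    unfolding Hmat_def using assms by (intro sum.cong refl) (simp add: of_nat_diff algebra_simps)
  finally show ?thesis unfolding newton_mat_def by (simp add: sum_distrib_left algebra_simps)
qed

lemma det_sub_Hmat_upt: "det_sub (Hmat n x) [1..<Suc n] [1..<Suc n] = 1"
proof -
  let ?A = "mat n n (\<lambda>(a, b). Hmat n x ([1..<Suc n] ! a) ([1..<Suc n] ! b))"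
  have "det ?A = prod_list (diag_mat ?A)"
    by (rule det_lower_triangular[of n]) (simp_all add: Hmat_def hsq_neg del: upt_Suc)
  also have "\<dots> = (\<Prod>i = 0..<n. ?A $$ (i, i))" by (simp add: prod_list_diag_prod)
  also have "\<dots> = 1" by (intro prod.neutral) (simp add: Hmat_def hsq_0 del: upt_Suc)
  finally show ?thesis unfolding det_sub_def by (simp del: upt_Suc)
qed

lemma det_sub_Hmat_reflected:
  "det_sub (\<lambda>j i. Hmat n x j (n + 1 - i)) (sorted_list_of_set {1..n}) (sorted_list_of_set {1..n})
     = signof (rev_perm n)"
proof -
  have upt: "sorted_list_of_set {1..n} = [1..<Suc n]"
    by (metis atLeastLessThanSuc_atLeastAtMost sorted_list_of_set_range)
  have "map (\<lambda>i. n + 1 - i) [1..<Suc n] = rev [1..<Suc n]"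
    by (rule nth_equalityI) (auto simp: rev_nth simp del: upt_Suc)
  then have "det_sub (\<lambda>j i. Hmat n x j (n + 1 - i)) [1..<Suc n] [1..<Suc n]
      = det_sub (Hmat n x) [1..<Suc n] (rev [1..<Suc n])"
    using det_sub_map_cols[of "[1..<Suc n]" "[1..<Suc n]" "Hmat n x" "\<lambda>i. n + 1 - i"] by simp
  then show ?thesis unfolding upt
    using det_sub_rev_cols[of "[1..<Suc n]" "[1..<Suc n]" "Hmat n x"] det_sub_Hmat_upt[of n x]
    by (simp del: upt_Suc)
qed

lemma sorted_list_of_set_star:
  assumes A: "A \<subseteq> {1..n}"
  shows "sorted_list_of_set (star n A) = rev (map (\<lambda>k. n + 1 - k) (sorted_list_of_set A))"
proof -
  have fA: "finite A" using A finite_subset by blast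
  let ?xs = "sorted_list_of_set A"
  let ?ys = "rev (map (\<lambda>k. n + 1 - k) ?xs)"
  have "sorted_wrt (>) (map (\<lambda>k. n + 1 - k) ?xs)"
    unfolding sorted_wrt_map
  proof (rule sorted_wrt_mono_rel[of _ "(<)"])
    fix a b assume "a \<in> set ?xs" "b \<in> set ?xs" "a < b"
    then show "n + 1 - b < n + 1 - a" using A fA by auto
  qed (use fA in simp)
  then have sorted: "sorted_wrt (<) ?ys" by (simp add: sorted_wrt_rev)
  then have "distinct ?ys" by (auto simp: strict_sorted_iff)
  then have "sorted_list_of_set (set ?ys) = ?ys"
    using sorted by (metis sorted_list_of_set_unique distinct_card finite_set subset_UNIV)
  moreover have "set ?ys = star n A" unfolding star_def using fA by simp
  ultimately show ?thesis by simp
qed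

lemma minor_Hmat_star:
  assumes J: "J \<subseteq> {1..n}" and I: "I \<subseteq> {1..n}" "card I = card J"
  shows "minor (Hmat n x) ({1..n} - J) (star n ({1..n} - I))
       = signof (rev_perm (n - card J))
         * det_sub (\<lambda>j i. Hmat n x j (n + 1 - i)) (sorted_list_of_set ({1..n} - J)) (sorted_list_of_set ({1..n} - I))"
proof -
  let ?rows = "sorted_list_of_set ({1..n} - J)"
  let ?cs = "sorted_list_of_set ({1..n} - I)"
  have len: "length ?cs = length ?rows" "length ?rows = n - card J"
    using I J by (simp_all add: card_Diff_subset finite_subset)
  have "minor (Hmat n x) ({1..n} - J) (star n ({1..n} - I)) = det_sub (Hmat n x) ?rows (rev (map (\<lambda>k. n + 1 - k) ?cs))"
    unfolding minor_eq_det_sub by (subst sorted_list_of_set_star) auto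
  also have "\<dots> = signof (rev_perm (n - card J)) * det_sub (Hmat n x) ?rows (map (\<lambda>k. n + 1 - k) ?cs)"
    using det_sub_rev_cols[of "map (\<lambda>k. n + 1 - k) ?cs" ?rows] len by simp
  also have "det_sub (Hmat n x) ?rows (map (\<lambda>k. n + 1 - k) ?cs) = det_sub (\<lambda>j i. Hmat n x j (n + 1 - i)) ?rows ?cs"
    by (rule det_sub_map_cols) (rule len(1))
  finally show ?thesis .
qed

lemma power_Sum_eq_laplace_sign:
  assumes I: "I \<subseteq> {1..n}"
  shows "(-1) ^ (\<Sum>I) = laplace_sign {1..n} I * (-1) ^ (card I + card I * (card I - 1) div 2)"
proof -
  have "position {1..n} c = c - 1" if "c \<in> I" for c
  proof -
    have "{s\<in>{1..n}. s < c} = {1..<c}" using that I by auto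
    then show ?thesis unfolding position_def by simp
  qed
  then have "(\<Sum>I) = (\<Sum>c\<in>I. position {1..n} c + 1)" using I by (intro sum.cong) auto
  also have "\<dots> = (\<Sum>c\<in>I. position {1..n} c) + card I" unfolding sum.distrib by simp
  finally have sum: "(\<Sum>I) + 2 * (card I * (card I - 1) div 2)
      = ((\<Sum>c\<in>I. position {1..n} c) + card I * (card I - 1) div 2) + (card I + card I * (card I - 1) div 2)"
    by simp
  have "(-1 :: 'a) ^ (\<Sum>I) = (-1) ^ ((\<Sum>I) + 2 * (card I * (card I - 1) div 2))"
    by (simp add: power_add power_mult)
  also have "\<dots> = laplace_sign {1..n} I * (-1) ^ (card I + card I * (card I - 1) div 2)"
    unfolding sum laplace_sign_def by (simp add: power_add)
  finally show ?thesis .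
qed

lemma frakF_eq_det_sub_append:
  assumes J: "J \<subseteq> {1..n}" and K: "K \<subseteq> {1..n}" "card K = card J"
  shows "frakF n x J K = signof (rev_perm (n - card J)) * (-1) ^ (card J + card J * (card J - 1) div 2)
      * det_sub (case_sum (\<lambda>k i. x k ^ (2 * i - 1)) (\<lambda>j i. Hmat n x j (n + 1 - i)))
          (map Inl (sorted_list_of_set K) @ map Inr (sorted_list_of_set ({1..n} - J))) (sorted_list_of_set {1..n})"
proof -
  let ?V = "\<lambda>k i. x k ^ (2 * i - 1)"
  let ?G = "\<lambda>j i. Hmat n x j (n + 1 - i)"
  let ?c = "signof (rev_perm (n - card J)) * (-1) ^ (card J + card J * (card J - 1) div 2) :: 'a"
  let ?P = "{I. I \<subseteq> {1..n} \<and> card I = card J}"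
  have "frakF n x J K = (\<Sum>I\<in>?P. ?c * (laplace_sign {1..n} I * det_sub ?V (sorted_list_of_set K) (sorted_list_of_set I)
      * det_sub ?G (sorted_list_of_set ({1..n} - J)) (sorted_list_of_set ({1..n} - I))))"
    unfolding frakF_def
  proof (intro sum.cong refl)
    fix I assume "I \<in> ?P"
    then have I: "I \<subseteq> {1..n}" "card I = card J" by auto
    show "(-1) ^ (\<Sum>I) * minor (Hmat n x) ({1..n} - J) (star n ({1..n} - I)) * minor ?V K I
        = ?c * (laplace_sign {1..n} I * det_sub ?V (sorted_list_of_set K) (sorted_list_of_set I)
          * det_sub ?G (sorted_list_of_set ({1..n} - J)) (sorted_list_of_set ({1..n} - I)))"
      unfolding minor_Hmat_star[OF J I] power_Sum_eq_laplace_sign[OF I(1)] minor_eq_det_sub[of ?V]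
      by (simp add: I(2) algebra_simps)
  qed
  also have "\<dots> = ?c * det_sub (case_sum ?V ?G)
      (map Inl (sorted_list_of_set K) @ map Inr (sorted_list_of_set ({1..n} - J))) (sorted_list_of_set {1..n})"
    using J K card_mono[OF _ J]
    by (subst det_sub_append_rows) (simp_all add: sum_distrib_left card_Diff_subset finite_subset)
  finally show ?thesis .
qed

lemma det_sub_odd_powers_factor:
  assumes len: "length rs = n" and Inr_mem: "\<And>j. Inr j \<in> set rs \<Longrightarrow> j \<in> {1..n}"
  shows "det_sub (case_sum (\<lambda>k i. x k ^ (2 * i - 1)) (\<lambda>j i. Hmat n x j (n + 1 - i))) rs (sorted_list_of_set {1..n})
       = det_sub (case_sum (newton_mat n x) (\<lambda>r c. of_bool (r = c))) rs (sorted_list_of_set {1..n})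
         * signof (rev_perm n)"
proof -
  let ?G = "\<lambda>j i. Hmat n x j (n + 1 - i)"
  have "det_sub (case_sum (\<lambda>k i. x k ^ (2 * i - 1)) ?G) rs (sorted_list_of_set {1..n})
      = det_sub (case_sum (newton_mat n x) (\<lambda>r c. of_bool (r = c))) rs (sorted_list_of_set {1..n})
        * det_sub ?G (sorted_list_of_set {1..n}) (sorted_list_of_set {1..n})"
  proof (rule det_sub_mult)
    fix \<rho> i assume \<rho>: "\<rho> \<in> set rs" and "i \<in> set (sorted_list_of_set {1..n})"
    then have i: "1 \<le> i" "i \<le> n" by auto
    show "case_sum (\<lambda>k i. x k ^ (2 * i - 1)) ?G \<rho> i
        = (\<Sum>t\<in>{1..n}. case_sum (newton_mat n x) (\<lambda>r c. of_bool (r = c)) \<rho> t * ?G t i)"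
    proof (cases \<rho>)
      case (Inl k)
      then show ?thesis using odd_power_eq_newton_mat_Hmat[OF i] by simp
    next
      case (Inr j)
      then show ?thesis using Inr_mem \<rho> by (simp add: of_bool_def if_distrib[of "\<lambda>b. b * _"] sum.delta cong: if_cong)
    qed
  qed (use len in simp_all)
  then show ?thesis unfolding det_sub_Hmat_reflected .
qed

definition frakF_sign :: "nat \<Rightarrow> nat set \<Rightarrow> int" where
  "frakF_sign n J = sign (rev_perm (n - card J)) * (-1) ^ (card J + card J * (card J - 1) div 2)
     * laplace_sign {1..n} J * sign (rev_perm n)"

lemma frakF_sign_cases: "frakF_sign n J \<in> {1, -1}"
proof -
  have "\<bar>frakF_sign n J\<bar> = 1"
    unfolding frakF_sign_def laplace_sign_def by (simp add: abs_mult power_abs sign_def)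
  then show ?thesis by (auto simp: abs_if split: if_splits)
qed

lemma frakF_eq_det_sub_newton_mat:
  assumes J: "J \<subseteq> {1..n}" and K: "K \<subseteq> {1..n}" "card K = card J"
  shows "frakF n x J K = of_int (frakF_sign n J) * det_sub (newton_mat n x) (sorted_list_of_set K) (sorted_list_of_set J)"
proof -
  let ?rows = "map Inl (sorted_list_of_set K) @ map Inr (sorted_list_of_set ({1..n} - J))"
  have "card J \<le> n" using card_mono[OF _ J] by simp
  then have len: "length ?rows = n" using J K by (simp add: card_Diff_subset finite_subset)
  have "frakF n x J K = signof (rev_perm (n - card J)) * (-1) ^ (card J + card J * (card J - 1) div 2)
      * (det_sub (case_sum (newton_mat n x) (\<lambda>r c. of_bool (r = c))) ?rows (sorted_list_of_set {1..n})
         * signof (rev_perm n))"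
    unfolding frakF_eq_det_sub_append[OF J K] by (subst det_sub_odd_powers_factor[OF len]) auto
  also have "det_sub (case_sum (newton_mat n x) (\<lambda>r c. of_bool (r = c))) ?rows (sorted_list_of_set {1..n})
      = laplace_sign {1..n} J * det_sub (newton_mat n x) (sorted_list_of_set K) (sorted_list_of_set J)"
    using J K by (intro det_sub_append_unit_rows) (simp_all add: finite_subset)
  finally show ?thesis unfolding frakF_sign_def laplace_sign_def by (simp add: algebra_simps)
qed

theorem mainTheorem8:
  fixes n :: nat and J K :: "nat set"
  assumes "J \<subseteq> {1..n}" and "K \<subseteq> {1..n}" and "card J = card K"
  shows "(\<not> gale_le K J \<longrightarrow> (\<forall>x :: nat \<Rightarrow> 'a::comm_ring_1. frakF n x J K = 0))
       \<and> (\<exists>s \<in> {1, -1 :: int}. \<forall>x :: nat \<Rightarrow> 'a::comm_ring_1. frakF n x J J = of_int s * fJ n x J)"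
proof
  have fin: "finite J" "finite K" using assms(1,2) by (auto intro: finite_subset)
  show "\<not> gale_le K J \<longrightarrow> (\<forall>x :: nat \<Rightarrow> 'a. frakF n x J K = 0)"
  proof (intro impI allI)
    fix x :: "nat \<Rightarrow> 'a" assume "\<not> gale_le K J"
    then have "det_sub (newton_mat n x) (sorted_list_of_set K) (sorted_list_of_set J) = 0"
      using assms(2) by (intro det_sub_upper_triangular_not_gale[OF fin assms(3)] newton_mat_eq_0) auto
    then show "frakF n x J K = 0" using assms by (simp add: frakF_eq_det_sub_newton_mat)
  qed
  have "frakF n x J J = of_int (frakF_sign n J) * fJ n x J" for x :: "nat \<Rightarrow> 'a"
  proof -
    have "det_sub (newton_mat n x) (sorted_list_of_set J) (sorted_list_of_set J) = (\<Prod>j\<in>J. newton_mat n x j j)"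
      using assms(1) by (intro det_sub_upper_triangular[OF fin(1)] newton_mat_eq_0) auto
    then show ?thesis
      using assms(1) by (simp add: frakF_eq_det_sub_newton_mat fJ_def newton_mat_def newton_basis_def)
  qed
  then show "\<exists>s \<in> {1, -1 :: int}. \<forall>x :: nat \<Rightarrow> 'a. frakF n x J J = of_int s * fJ n x J"
    using frakF_sign_cases by blast
qed

end
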